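(* For every $t\ge0$, the map $\mathcal K_u(X,J)\to\mathbb R$, $\Psi\mapsto\underline P^\Psi(t)$, is continuous with respect to the metric $d_u$.
   Context: Fix $d\in\mathbb N$, a compact set $X\subset\mathbb R^d$ equal to the closure of its interior with $\partial X$ smooth or $X$ convex, an open connected $V\supset X$, and constants $K\ge1$, $\eta<1$. Let $J=(I^{(k)})_{k\ge1}$ be a sequence of finite sets. An NCIFS with alphabet $J$ is a sequence $\Phi^{(j)}=(\phi^{(j)}_i:X\to X)_{i\in I^{(j)}}$ satisfying: - images of $\operatorname{int}X$ under distinct maps of the same level are disjoint; - every map extends to a $C^1$ conformal diffeomorphism of $V$ into $V$; - every composition $\phi=\phi^{(k)}_{\omega_k}\circ\cdots\circ\phi^{(l)}_{\omega_l}$ satisfies $|\phi'(x)|\le K|\phi'(y)|$ for $x,y\in V$; - $\|D\phi^{(j)}_i\|:=\sup_{x\in X}|(\phi^{(j)}_i)'(x)|\le\eta$. $\mathcal K_u(X,J)$ is the set of such systems satisfying: - (Ka) there is $\kappa>0$ with $\inf\{|D\phi^{(n)}_a(x)|:n\ge1,a\in I^{(n)},x\in X\}>\kappa$; - (Kb) the family $\{|D\phi^{(n)}_a|:n\ge1,a\in I^{(n)}\}$ is uniformly equicontinuous on $X$. Here $|D\phi(x)|$ is the scaling factor of the conformal derivative. The metric is \[d_u(\Phi,\Psi)=\sup_{n\ge1}\max_{a\in I^{(n)}}\max\{\|\phi^{(n)}_a-\psi^{(n)}_a\|_\infty,\|D\phi^{(n)}_a-D\psi^{(n)}_a\|_\infty\}.\]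 The lower pressure is $\underline P^\Phi(t)=\liminf_{n\to\infty}\frac1n\log\sum_{\omega\in\prod_{j\le n}I^{(j)}}\|D(\phi^{(1)}_{\omega_1}\circ\cdots\circ\phi^{(n)}_{\omega_n})\|^t$. *)

theory Defs
  imports "HOL-Analysis.Analysis"
begin

primrec iter_dderiv :: "'a::real_normed_vector list \<Rightarrow> ('a \<Rightarrow> real) \<Rightarrow> 'a \<Rightarrow> real" where
  "iter_dderiv [] g = g"
| "iter_dderiv (v # vs) g = (\<lambda>x. frechet_derivative (iter_dderiv vs g) (at x) v)"

definition smooth_on :: "'a::real_normed_vector set \<Rightarrow> ('a \<Rightarrow> real) \<Rightarrow> bool" where
  "smooth_on U g \<longleftrightarrow> (\<forall>vs. iter_dderiv vs g differentiable_on U)"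

definition smooth_boundary :: "'a::euclidean_space set \<Rightarrow> bool" where
  "smooth_boundary X \<longleftrightarrow>
     (\<forall>p\<in>frontier X. \<exists>U g. open U \<and> p \<in> U \<and> smooth_on U g \<and>
        frechet_derivative g (at p) \<noteq> (\<lambda>v. 0) \<and>
        X \<inter> U = {x\<in>U. g x \<le> 0})"

definition conformal_linear :: "('a::real_normed_vector \<Rightarrow> 'a) \<Rightarrow> bool" where
  "conformal_linear L \<longleftrightarrow> linear L \<and> (\<exists>c>0. \<forall>v. norm (L v) = c * norm v)"

definition C1_conformal_on :: "'a::euclidean_space set \<Rightarrow> ('a \<Rightarrow> 'a) \<Rightarrow> bool" where
  "C1_conformal_on V f \<longleftrightarrow>
     (\<exists>f'. (\<forall>x\<in>V. (f has_derivative blinfun_apply (f' x)) (at x)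
                   \<and> conformal_linear (blinfun_apply (f' x)))
          \<and> continuous_on V f')"

definition scal :: "('a::real_normed_vector \<Rightarrow> 'a) \<Rightarrow> 'a \<Rightarrow> real" where
  "scal f x = onorm (frechet_derivative f (at x))"

definition normD :: "('a::real_normed_vector \<Rightarrow> 'a) \<Rightarrow> 'a set \<Rightarrow> real" where
  "normD f X = (SUP x\<in>X. scal f x)"

text \<open>A system is Phi :: nat => 'b => 'a => 'a, with Phi n a the map phi^(n)_a
  (n \<ge> 1, a \<in> I n).  wcomp Phi w k m = phi^(k)_(w k) o ... o phi^(k+m-1)_(w (k+m-1)).\<close>
primrec wcomp :: "(nat \<Rightarrow> 'b \<Rightarrow> 'a \<Rightarrow> 'a) \<Rightarrow> (nat \<Rightarrow> 'b) \<Rightarrow> nat \<Rightarrow> nat \<Rightarrow> 'a \<Rightarrow> 'a" where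
  "wcomp Phi w k 0 = id"
| "wcomp Phi w k (Suc m) = wcomp Phi w k m \<circ> Phi (k + m) (w (k + m))"

definition NCIFS ::
  "'a::euclidean_space set \<Rightarrow> 'a set \<Rightarrow> real \<Rightarrow> real \<Rightarrow> (nat \<Rightarrow> 'b set)
     \<Rightarrow> (nat \<Rightarrow> 'b \<Rightarrow> 'a \<Rightarrow> 'a) \<Rightarrow> bool" where
  "NCIFS X V K \<eta> I Phi \<longleftrightarrow>
     (\<forall>n\<ge>1. \<forall>a\<in>I n. Phi n a ` X \<subseteq> X) \<and>
     (\<forall>n\<ge>1. \<forall>a\<in>I n. \<forall>b\<in>I n. a \<noteq> b \<longrightarrow>
          Phi n a ` interior X \<inter> Phi n b ` interior X = {}) \<and>
     (\<forall>n\<ge>1. \<forall>a\<in>I n. inj_on (Phi n a) V \<and> Phi n a ` V \<subseteq> V \<and> C1_conformal_on V (Phi n a)) \<and>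
     (\<forall>k\<ge>1. \<forall>m\<ge>1. \<forall>w. (\<forall>j\<in>{k..<k+m}. w j \<in> I j) \<longrightarrow>
          (\<forall>x\<in>V. \<forall>y\<in>V. scal (wcomp Phi w k m) x \<le> K * scal (wcomp Phi w k m) y)) \<and>
     (\<forall>n\<ge>1. \<forall>a\<in>I n. normD (Phi n a) X \<le> \<eta>)"

definition Ku ::
  "'a::euclidean_space set \<Rightarrow> 'a set \<Rightarrow> real \<Rightarrow> real \<Rightarrow> (nat \<Rightarrow> 'b set)
     \<Rightarrow> (nat \<Rightarrow> 'b \<Rightarrow> 'a \<Rightarrow> 'a) set" where
  "Ku X V K \<eta> I = {Phi. NCIFS X V K \<eta> I Phi \<and>
     (\<exists>\<kappa>>0. (INF p\<in>{(n, a, x). n \<ge> 1 \<and> a \<in> I n \<and> x \<in> X}.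
                  scal (Phi (fst p) (fst (snd p))) (snd (snd p))) > \<kappa>) \<and>
     (\<forall>\<epsilon>>0. \<exists>\<delta>>0. \<forall>n\<ge>1. \<forall>a\<in>I n. \<forall>x\<in>X. \<forall>y\<in>X. dist x y < \<delta> \<longrightarrow>
          \<bar>scal (Phi n a) x - scal (Phi n a) y\<bar> < \<epsilon>)}"

text \<open>The metric d_u (extended-real valued to avoid junk values of Sup).\<close>
definition du ::
  "'a::euclidean_space set \<Rightarrow> (nat \<Rightarrow> 'b set) \<Rightarrow> (nat \<Rightarrow> 'b \<Rightarrow> 'a \<Rightarrow> 'a)
     \<Rightarrow> (nat \<Rightarrow> 'b \<Rightarrow> 'a \<Rightarrow> 'a) \<Rightarrow> ereal" where
  "du X I Phi Psi = (SUP n\<in>{1..}. SUP a\<in>I n.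
      max (SUP x\<in>X. ereal (norm (Phi n a x - Psi n a x)))
          (SUP x\<in>X. ereal (onorm (\<lambda>v. frechet_derivative (Phi n a) (at x) v
                                     - frechet_derivative (Psi n a) (at x) v))))"

definition lower_pressure ::
  "'a::euclidean_space set \<Rightarrow> (nat \<Rightarrow> 'b set) \<Rightarrow> (nat \<Rightarrow> 'b \<Rightarrow> 'a \<Rightarrow> 'a) \<Rightarrow> real \<Rightarrow> ereal" where
  "lower_pressure X I Phi t = liminf (\<lambda>n. ereal ((1 / real n) *
      ln (\<Sum>w\<in>PiE {1..n} I. normD (wcomp Phi w 1 n) X powr t)))"

end

theory Submission
  imports Defs
begin

text \<open>If \<open>d_u(Phi, Psi) < \<delta>\<close>, the orbits of a point under the compositions of \<open>Phi\<close> and of \<open>Psi\<close>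
  along the same word stay within \<open>K \<delta> / (1 - \<eta>)\<close> of each other: each one-step error is
  contracted geometrically by the remaining maps. By the uniform equicontinuity (Kb) and the
  uniform lower bound (Ka) of the derivatives, each one-step scaling factor of \<open>Psi\<close> along its orbit
  is then within a factor \<open>c\<close> close to \<open>1\<close> of the corresponding factor of \<open>Phi\<close>. Since the scaling
  factor of a composition of conformal maps is the product of these factors, the norms
  \<open>\<parallel>D\<phi>\<^sub>\<omega>\<parallel>\<close> and \<open>\<parallel>D\<psi>\<^sub>\<omega>\<parallel>\<close> of words of length \<open>n\<close> differ at most by the factor \<open>c ^ n\<close>,
  so the normalised pressure sums and hence their liminfs differ at most by \<open>t log c\<close>.\<close>

section \<open>Scaling factors of conformal maps\<close>

definition conformal_at :: "('a::real_normed_vector \<Rightarrow> 'a) \<Rightarrow> 'a \<Rightarrow> real \<Rightarrow> bool" where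
  "conformal_at f z s \<longleftrightarrow>
     s > 0 \<and> (\<exists>L. (f has_derivative L) (at z) \<and> (\<forall>v. norm (L v) = s * norm v))"

lemma onorm_eq_of_norm_eq_mult:
  fixes L :: "'a::euclidean_space \<Rightarrow> 'a"
  assumes "bounded_linear L" "\<And>v. norm (L v) = s * norm v" "s \<ge> 0"
  shows "onorm L = s"
proof (rule antisym)
  show "onorm L \<le> s" by (rule onorm_le) (simp add: assms)
  obtain b :: 'a where "b \<in> Basis" using nonempty_Basis by blast
  then have "norm b = 1" by simp
  moreover have "norm (L b) / norm b \<le> onorm L" by (rule le_onorm[OF assms(1)])
  ultimately show "s \<le> onorm L" using assms(2)[of b] by simp
qed

lemma scal_eq_if_conformal_at:
  fixes f :: "'a::euclidean_space \<Rightarrow> 'a"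
  assumes "conformal_at f z s"
  shows "scal f z = s"
proof -
  from assms obtain L where s: "s > 0" and d: "(f has_derivative L) (at z)"
    and n: "\<And>v. norm (L v) = s * norm v"
    unfolding conformal_at_def by blast
  have "frechet_derivative f (at z) = L" using frechet_derivative_at[OF d] by simp
  with onorm_eq_of_norm_eq_mult[OF has_derivative_bounded_linear[OF d] n] s show ?thesis
    unfolding scal_def by simp
qed

lemma conformal_at_compose:
  assumes "conformal_at f z s" "conformal_at g (f z) s'"
  shows "conformal_at (g \<circ> f) z (s' * s)"
proof -
  from assms(1) obtain L where "s > 0" "(f has_derivative L) (at z)" "\<And>v. norm (L v) = s * norm v"
    unfolding conformal_at_def by blast
  moreover from assms(2) obtain M where
    "s' > 0" "(g has_derivative M) (at (f z))" "\<And>v. norm (M v) = s' * norm v"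
    unfolding conformal_at_def by blast
  ultimately show ?thesis
    unfolding conformal_at_def o_def by (auto intro!: exI has_derivative_compose)
qed

lemma conformal_at_id: "conformal_at (\<lambda>x. x) z 1"
  unfolding conformal_at_def by (auto intro!: exI[of _ "\<lambda>x. x"])

lemma scal_id [simp]: "scal (\<lambda>x::'a::euclidean_space. x) z = 1"
  by (rule scal_eq_if_conformal_at[OF conformal_at_id])

lemma onorm_diff_ge:
  assumes "bounded_linear A" "bounded_linear B"
  shows "\<bar>onorm A - onorm B\<bar> \<le> onorm (\<lambda>v. A v - B v)"
proof -
  have AB: "bounded_linear (\<lambda>v. A v - B v)" using assms by (rule bounded_linear_sub)
  have "onorm (\<lambda>v. B v + (A v - B v)) \<le> onorm B + onorm (\<lambda>v. A v - B v)"
    by (rule onorm_triangle[OF assms(2) AB])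
  moreover have "onorm (\<lambda>v. A v + - (A v - B v)) \<le> onorm A + onorm (\<lambda>v. - (A v - B v))"
    by (rule onorm_triangle[OF assms(1) bounded_linear_minus[OF AB]])
  moreover have "onorm (\<lambda>v. B v - A v) = onorm (\<lambda>v. A v - B v)"
    using onorm_neg[of "\<lambda>v. A v - B v"] by simp
  ultimately show ?thesis by (simp add: onorm_neg)
qed

section \<open>Compositions along admissible words\<close>

lemma wcomp_Suc_left: "wcomp Phi w k (Suc m) = Phi k (w k) \<circ> wcomp Phi w (Suc k) m"
  by (induction m arbitrary: k) (simp_all add: o_assoc)

definition admissible :: "(nat \<Rightarrow> 'b set) \<Rightarrow> (nat \<Rightarrow> 'b) \<Rightarrow> nat \<Rightarrow> nat \<Rightarrow> bool" where
  "admissible I w k m \<longleftrightarrow> k \<ge> 1 \<and> (\<forall>j\<in>{k..<k+m}. w j \<in> I j)"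

lemma admissible_Suc_right:
  "admissible I w k (Suc m) \<Longrightarrow> admissible I w k m \<and> k + m \<ge> 1 \<and> w (k + m) \<in> I (k + m)"
  unfolding admissible_def by auto

lemma admissible_Suc_left:
  "admissible I w k (Suc m) \<Longrightarrow> admissible I w (Suc k) m \<and> k \<ge> 1 \<and> w k \<in> I k"
  unfolding admissible_def by auto

lemma admissible_PiE: "w \<in> PiE {1..n} I \<Longrightarrow> admissible I w 1 n"
  unfolding admissible_def by (auto simp: PiE_iff)

locale ncifs_system =
  fixes X V :: "'a::euclidean_space set" and K \<eta> :: real and I :: "nat \<Rightarrow> 'b set"
    and Phi :: "nat \<Rightarrow> 'b \<Rightarrow> 'a \<Rightarrow> 'a"
  assumes NCIFS: "NCIFS X V K \<eta> I Phi" and X_subset_V: "X \<subseteq> V" and X_nonempty: "X \<noteq> {}"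
begin

lemma maps_X_image: "\<forall>n\<ge>1. \<forall>a\<in>I n. Phi n a ` X \<subseteq> X"
  and maps_V_C1_conformal: "\<forall>n\<ge>1. \<forall>a\<in>I n. Phi n a ` V \<subseteq> V \<and> C1_conformal_on V (Phi n a)"
  and bounded_distortion_wcomp: "\<forall>k\<ge>1. \<forall>m\<ge>1. \<forall>w. (\<forall>j\<in>{k..<k+m}. w j \<in> I j) \<longrightarrow>
          (\<forall>x\<in>V. \<forall>y\<in>V. scal (wcomp Phi w k m) x \<le> K * scal (wcomp Phi w k m) y)"
  and normD_le_eta_all: "\<forall>n\<ge>1. \<forall>a\<in>I n. normD (Phi n a) X \<le> \<eta>"
  using NCIFS unfolding NCIFS_def by simp_all

lemma maps_X: "n \<ge> 1 \<Longrightarrow> a \<in> I n \<Longrightarrow> x \<in> X \<Longrightarrow> Phi n a x \<in> X"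
  using maps_X_image by blast

lemma maps_V: "n \<ge> 1 \<Longrightarrow> a \<in> I n \<Longrightarrow> x \<in> V \<Longrightarrow> Phi n a x \<in> V"
  using maps_V_C1_conformal by blast

lemma bounded_distortion:
  "admissible I w k m \<Longrightarrow> m \<ge> 1 \<Longrightarrow> x \<in> V \<Longrightarrow> y \<in> V \<Longrightarrow>
     scal (wcomp Phi w k m) x \<le> K * scal (wcomp Phi w k m) y"
  using bounded_distortion_wcomp unfolding admissible_def by blast

lemma normD_le_eta: "n \<ge> 1 \<Longrightarrow> a \<in> I n \<Longrightarrow> normD (Phi n a) X \<le> \<eta>"
  using normD_le_eta_all by blast

lemma conformal_at_Phi:
  assumes "n \<ge> 1" "a \<in> I n" "x \<in> V"
  shows "conformal_at (Phi n a) x (scal (Phi n a) x)"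
proof -
  have "C1_conformal_on V (Phi n a)" using maps_V_C1_conformal assms by blast
  then obtain f' where "(Phi n a has_derivative blinfun_apply (f' x)) (at x)"
      "conformal_linear (blinfun_apply (f' x))"
    using assms(3) unfolding C1_conformal_on_def by blast
  then obtain c where "conformal_at (Phi n a) x c"
    unfolding conformal_at_def conformal_linear_def by blast
  then show ?thesis using scal_eq_if_conformal_at by metis
qed

lemma bounded_linear_derivative:
  assumes "n \<ge> 1" "a \<in> I n" "x \<in> V"
  shows "bounded_linear (frechet_derivative (Phi n a) (at x))"
proof -
  obtain L where "(Phi n a has_derivative L) (at x)"
    using conformal_at_Phi[OF assms] unfolding conformal_at_def by blast
  then show ?thesis using frechet_derivative_at has_derivative_bounded_linear by metis
qed

lemma wcomp_in_X: "admissible I w k m \<Longrightarrow> x \<in> X \<Longrightarrow> wcomp Phi w k m x \<in> X"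
  by (induction m arbitrary: x) (auto dest: admissible_Suc_right intro: maps_X)

lemma wcomp_in_V: "admissible I w k m \<Longrightarrow> x \<in> V \<Longrightarrow> wcomp Phi w k m x \<in> V"
  by (induction m arbitrary: x) (auto dest: admissible_Suc_right intro: maps_V)

lemma conformal_at_wcomp:
  "admissible I w k m \<Longrightarrow> x \<in> V \<Longrightarrow> conformal_at (wcomp Phi w k m) x (scal (wcomp Phi w k m) x)"
proof (induction m arbitrary: x)
  case 0
  then show ?case using conformal_at_id by simp
next
  case (Suc m)
  note adm = admissible_Suc_right[OF Suc.prems(1)]
  have "conformal_at (wcomp Phi w k m \<circ> Phi (k + m) (w (k + m))) x
      (scal (wcomp Phi w k m) (Phi (k + m) (w (k + m)) x) * scal (Phi (k + m) (w (k + m))) x)"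
    using adm Suc.prems by (intro conformal_at_compose conformal_at_Phi Suc.IH maps_V) auto
  then show ?case using scal_eq_if_conformal_at by (metis wcomp.simps(2))
qed

lemma scal_wcomp_pos: "admissible I w k m \<Longrightarrow> x \<in> V \<Longrightarrow> scal (wcomp Phi w k m) x > 0"
  using conformal_at_wcomp unfolding conformal_at_def by blast

lemma scal_pos: "n \<ge> 1 \<Longrightarrow> a \<in> I n \<Longrightarrow> x \<in> V \<Longrightarrow> scal (Phi n a) x > 0"
  using conformal_at_Phi unfolding conformal_at_def by blast

lemma scal_wcomp_Suc_left:
  assumes "admissible I w k (Suc m)" "x \<in> V"
  shows "scal (wcomp Phi w k (Suc m)) x
     = scal (Phi k (w k)) (wcomp Phi w (Suc k) m x) * scal (wcomp Phi w (Suc k) m) x"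
proof -
  note adm = admissible_Suc_left[OF assms(1)]
  have "conformal_at (Phi k (w k) \<circ> wcomp Phi w (Suc k) m) x
     (scal (Phi k (w k)) (wcomp Phi w (Suc k) m x) * scal (wcomp Phi w (Suc k) m) x)"
    using adm assms by (intro conformal_at_compose conformal_at_wcomp conformal_at_Phi wcomp_in_V) auto
  then show ?thesis using scal_eq_if_conformal_at wcomp_Suc_left by metis
qed

text \<open>Bounded distortion with \<open>m = 1\<close> makes \<open>scal (Phi n a)\<close> bounded on \<open>X\<close>, so the
  supremum \<open>normD\<close> is a genuine bound.\<close>
lemma scal_le_eta:
  assumes "n \<ge> 1" "a \<in> I n" "x \<in> X"
  shows "scal (Phi n a) x \<le> \<eta>"
proof -
  obtain y where y: "y \<in> X" using X_nonempty by blast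
  have adm: "admissible I (\<lambda>_. a) n 1" unfolding admissible_def using assms by auto
  have "bdd_above (scal (Phi n a) ` X)"
    using bounded_distortion[OF adm, of _ y] y X_subset_V by (intro bdd_aboveI2) auto
  then have "scal (Phi n a) x \<le> normD (Phi n a) X"
    unfolding normD_def by (rule cSUP_upper[OF assms(3)])
  also have "\<dots> \<le> \<eta>" using normD_le_eta assms by blast
  finally show ?thesis .
qed

lemma scal_wcomp_le_eta_power:
  "admissible I w k m \<Longrightarrow> x \<in> X \<Longrightarrow> scal (wcomp Phi w k m) x \<le> \<eta> ^ m"
proof (induction m arbitrary: k)
  case 0
  then show ?case by simp
next
  case (Suc m)
  note adm = admissible_Suc_left[OF Suc.prems(1)]
  have xV: "x \<in> V" using Suc.prems(2) X_subset_V by blast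
  have "scal (Phi k (w k)) (wcomp Phi w (Suc k) m x) * scal (wcomp Phi w (Suc k) m) x \<le> \<eta> * \<eta> ^ m"
  proof (rule mult_mono)
    show "scal (Phi k (w k)) (wcomp Phi w (Suc k) m x) \<le> \<eta>"
      using adm Suc.prems(2) by (intro scal_le_eta wcomp_in_X) auto
    show "scal (wcomp Phi w (Suc k) m) x \<le> \<eta> ^ m" using Suc.IH adm Suc.prems(2) by blast
    show "0 \<le> scal (wcomp Phi w (Suc k) m) x" using scal_wcomp_pos adm xV by (simp add: less_imp_le)
    show "0 \<le> \<eta>"
      using adm Suc.prems(2) xV scal_le_eta[of k "w k" x] scal_pos[of k "w k" x] by linarith
  qed
  then show ?case unfolding scal_wcomp_Suc_left[OF Suc.prems(1) xV] power_Suc .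
qed

lemma eta_nonneg:
  assumes "n \<ge> 1" "I n \<noteq> {}"
  shows "0 \<le> \<eta>"
proof -
  obtain a x where "a \<in> I n" "x \<in> X" using assms(2) X_nonempty by blast
  then show ?thesis
    using scal_le_eta[of n a x] scal_pos[of n a x] assms(1) X_subset_V by fastforce
qed

lemma bdd_above_scal_wcomp: "admissible I w k m \<Longrightarrow> bdd_above (scal (wcomp Phi w k m) ` X)"
  by (rule bdd_aboveI2[of _ _ "\<eta> ^ m"]) (rule scal_wcomp_le_eta_power)

lemma normD_wcomp_pos: "admissible I w k m \<Longrightarrow> 0 < normD (wcomp Phi w k m) X"
proof -
  assume adm: "admissible I w k m"
  obtain x where x: "x \<in> X" using X_nonempty by blast
  show ?thesis
    unfolding normD_def
    using scal_wcomp_pos[OF adm] cSUP_upper[OF x bdd_above_scal_wcomp[OF adm]] x X_subset_V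
    by (meson less_le_trans subsetD)
qed

text \<open>Mean value inequality: on a ball inside \<open>V\<close>, bounded distortion compares the derivative
  everywhere with its value at the centre \<open>a \<in> X\<close>, which is at most \<open>\<eta> ^ m\<close>.\<close>
lemma wcomp_lipschitz:
  assumes adm: "admissible I w k m" and a: "a \<in> X" and ball: "ball a r \<subseteq> V"
    and K: "K \<ge> 1" and b: "norm (b - a) < r"
  shows "norm (wcomp Phi w k m b - wcomp Phi w k m a) \<le> K * \<eta> ^ m * norm (b - a)"
proof (cases "m = 0")
  case True
  then show ?thesis using mult_right_mono[OF K norm_ge_zero[of "b - a"]] by simp
next
  case False
  let ?F = "wcomp Phi w k m"
  have der: "(?F has_derivative frechet_derivative ?F (at z)) (at z within ball a r)"
    if "z \<in> ball a r" for z
  proof -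
    have "z \<in> V" using ball that by blast
    then obtain L where "(?F has_derivative L) (at z)"
      using conformal_at_wcomp[OF adm] unfolding conformal_at_def by blast
    then show ?thesis
      using frechet_derivative_works has_derivative_at_withinI differentiableI by blast
  qed
  have bnd: "onorm (frechet_derivative ?F (at z)) \<le> K * \<eta> ^ m" if "z \<in> ball a r" for z
  proof -
    have "z \<in> V" "a \<in> V" using ball that a X_subset_V by auto
    then have "onorm (frechet_derivative ?F (at z)) \<le> K * scal ?F a"
      unfolding scal_def[symmetric] using bounded_distortion[OF adm] False by simp
    also have "\<dots> \<le> K * \<eta> ^ m" using scal_wcomp_le_eta_power[OF adm a] K by simp
    finally show ?thesis .
  qed
  have "b \<in> ball a r" "a \<in> ball a r"
    using b le_less_trans[OF norm_ge_zero b] by (auto simp: dist_norm norm_minus_commute)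
  then show ?thesis using differentiable_bound[OF convex_ball der bnd] by blast
qed

end

section \<open>Two nearby systems\<close>

lemma ratio_le_of_abs_diff_less:
  fixes A B \<kappa> \<epsilon> :: real
  assumes AB: "\<bar>A - B\<bar> < \<kappa> * \<epsilon>" and B: "\<kappa> \<le> B" and "0 < \<kappa>" "0 < \<epsilon>" "\<epsilon> \<le> 1/2"
  shows "A \<le> (1 + 2 * \<epsilon>) * B" and "B \<le> (1 + 2 * \<epsilon>) * A"
proof -
  have "\<kappa> * \<epsilon> \<le> B * \<epsilon>" using B assms by (simp add: mult_right_mono)
  moreover have "0 \<le> B * \<epsilon>" using B assms by simp
  ultimately have "A \<le> B + 2 * (B * \<epsilon>)" using AB by linarith
  then show "A \<le> (1 + 2 * \<epsilon>) * B" by (simp add: algebra_simps)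
  have "\<kappa> * \<epsilon> \<le> \<kappa> / 2" using assms by (simp add: mult_left_le)
  then have "\<kappa> \<le> 2 * A" using AB B by linarith
  from mult_right_mono[OF this, of \<epsilon>] have "\<kappa> * \<epsilon> \<le> 2 * \<epsilon> * A" using assms by (simp add: algebra_simps)
  then show "B \<le> (1 + 2 * \<epsilon>) * A" using AB by (simp add: algebra_simps)
qed

locale ncifs_pair = P: ncifs_system X V K \<eta> I Phi + Q: ncifs_system X V K \<eta> I Psi
  for X V K \<eta> I Phi Psi +
  fixes r \<delta> :: real
  assumes balls_in_V: "\<forall>a\<in>X. ball a r \<subseteq> V" and K_ge_1: "K \<ge> 1"
    and eta_nonneg: "0 \<le> \<eta>" and eta_less_1: "\<eta> < 1"
    and maps_close: "\<forall>n\<ge>1. \<forall>a\<in>I n. \<forall>x\<in>X. norm (Psi n a x - Phi n a x) < \<delta>"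
    and delta_nonneg: "0 \<le> \<delta>" and delta_le_r: "\<delta> \<le> r"
begin

lemma ncifs_pair_swap: "ncifs_pair X V K \<eta> I Psi Phi r \<delta>"
  using P.ncifs_system_axioms Q.ncifs_system_axioms ncifs_pair_axioms
  by (simp add: ncifs_pair_def ncifs_pair_axioms_def norm_minus_commute)

text \<open>Telescoping along the orbit: the \<open>j\<close>-th error \<open>< \<delta>\<close> is transported by the remaining
  \<open>j\<close> maps of \<open>Phi\<close>, which contract it by \<open>K \<eta> ^ j\<close>.\<close>
lemma wcomp_dist_le_geometric:
  "admissible I w k m \<Longrightarrow> x \<in> X \<Longrightarrow>
     norm (wcomp Phi w k m x - wcomp Psi w k m x) \<le> K * \<delta> * (1 - \<eta> ^ m) / (1 - \<eta>)"
proof (induction m arbitrary: x)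
  case 0
  then show ?case by simp
next
  case (Suc m)
  note adm = admissible_Suc_right[OF Suc.prems(1)]
  let ?p = "Phi (k + m) (w (k + m)) x" and ?q = "Psi (k + m) (w (k + m)) x"
  have qX: "?q \<in> X" using Q.maps_X adm Suc.prems(2) by blast
  have pq: "norm (?p - ?q) < \<delta>" using maps_close adm Suc.prems(2) by (metis norm_minus_commute)
  have "norm (wcomp Phi w k m ?p - wcomp Phi w k m ?q) \<le> K * \<eta> ^ m * norm (?p - ?q)"
    using P.wcomp_lipschitz[OF conjunct1[OF adm] qX] balls_in_V qX K_ge_1 pq delta_le_r by auto
  also have "\<dots> \<le> K * \<eta> ^ m * \<delta>"
    using pq K_ge_1 eta_nonneg by (intro mult_left_mono) auto
  finally have "norm (wcomp Phi w k m ?p - wcomp Phi w k m ?q) \<le> K * \<eta> ^ m * \<delta>" .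
  moreover have "norm (wcomp Phi w k m ?q - wcomp Psi w k m ?q) \<le> K * \<delta> * (1 - \<eta> ^ m) / (1 - \<eta>)"
    using Suc.IH[OF conjunct1[OF adm] qX] .
  ultimately have "norm (wcomp Phi w k (Suc m) x - wcomp Psi w k (Suc m) x)
      \<le> K * \<eta> ^ m * \<delta> + K * \<delta> * (1 - \<eta> ^ m) / (1 - \<eta>)"
    using norm_triangle_le[of "wcomp Phi w k m ?p - wcomp Phi w k m ?q"
        "wcomp Phi w k m ?q - wcomp Psi w k m ?q"] by simp
  also have "\<dots> = K * \<delta> * (1 - \<eta> ^ Suc m) / (1 - \<eta>)"
    using eta_less_1 by (simp add: field_simps)
  finally show ?case .
qed

lemma wcomp_dist_le:
  assumes "admissible I w k m" "x \<in> X"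
  shows "norm (wcomp Phi w k m x - wcomp Psi w k m x) \<le> K * \<delta> / (1 - \<eta>)"
proof -
  have "K * \<delta> * (1 - \<eta> ^ m) \<le> K * \<delta>"
    using K_ge_1 delta_nonneg eta_nonneg by (simp add: mult_left_le)
  then have "K * \<delta> * (1 - \<eta> ^ m) / (1 - \<eta>) \<le> K * \<delta> / (1 - \<eta>)"
    using eta_less_1 by (intro divide_right_mono) auto
  then show ?thesis using wcomp_dist_le_geometric[OF assms] by linarith
qed

text \<open>The scaling factor of a composition is the product of the one-step factors along the orbit,
  and by \<open>wcomp_dist_le\<close> the two orbits are always close enough for \<open>step\<close> to apply.\<close>
lemma scal_wcomp_le_power:
  assumes c: "0 \<le> c"
    and step: "\<forall>n\<ge>1. \<forall>a\<in>I n. \<forall>x\<in>X. \<forall>y\<in>X. norm (x - y) \<le> K * \<delta> / (1 - \<eta>) \<longrightarrow>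
                 scal (Psi n a) y \<le> c * scal (Phi n a) x"
  shows "admissible I w k m \<Longrightarrow> x \<in> X \<Longrightarrow>
           scal (wcomp Psi w k m) x \<le> c ^ m * scal (wcomp Phi w k m) x"
proof (induction m arbitrary: k)
  case 0
  then show ?case by simp
next
  case (Suc m)
  note adm = admissible_Suc_left[OF Suc.prems(1)]
  have xV: "x \<in> V" using Suc.prems(2) P.X_subset_V by blast
  let ?u = "wcomp Phi w (Suc k) m x" and ?v = "wcomp Psi w (Suc k) m x"
  have "scal (Psi k (w k)) ?v * scal (wcomp Psi w (Suc k) m) x
      \<le> (c * scal (Phi k (w k)) ?u) * (c ^ m * scal (wcomp Phi w (Suc k) m) x)"
  proof (rule mult_mono)
    show "scal (Psi k (w k)) ?v \<le> c * scal (Phi k (w k)) ?u"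
      using step adm Suc.prems(2) P.wcomp_in_X Q.wcomp_in_X wcomp_dist_le by blast
    show "scal (wcomp Psi w (Suc k) m) x \<le> c ^ m * scal (wcomp Phi w (Suc k) m) x"
      using Suc.IH adm Suc.prems(2) by blast
    show "0 \<le> c * scal (Phi k (w k)) ?u"
      using c P.scal_pos[of k "w k" ?u] P.wcomp_in_V adm xV by simp
    show "0 \<le> scal (wcomp Psi w (Suc k) m) x"
      using Q.scal_wcomp_pos adm xV by (simp add: less_imp_le)
  qed
  then show ?case
    unfolding P.scal_wcomp_Suc_left[OF Suc.prems(1) xV] Q.scal_wcomp_Suc_left[OF Suc.prems(1) xV]
    by (simp add: algebra_simps)
qed

lemma normD_wcomp_le_power:
  assumes "0 \<le> c"
    and "\<forall>n\<ge>1. \<forall>a\<in>I n. \<forall>x\<in>X. \<forall>y\<in>X. norm (x - y) \<le> K * \<delta> / (1 - \<eta>) \<longrightarrow>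
           scal (Psi n a) y \<le> c * scal (Phi n a) x"
    and adm: "admissible I w k m"
  shows "normD (wcomp Psi w k m) X \<le> c ^ m * normD (wcomp Phi w k m) X"
  unfolding normD_def
proof (rule cSUP_least[OF P.X_nonempty])
  fix x assume x: "x \<in> X"
  have "scal (wcomp Psi w k m) x \<le> c ^ m * scal (wcomp Phi w k m) x"
    using scal_wcomp_le_power[OF assms(1,2) adm x] .
  also have "\<dots> \<le> c ^ m * (SUP x\<in>X. scal (wcomp Phi w k m) x)"
    using assms(1) by (intro mult_left_mono cSUP_upper[OF x P.bdd_above_scal_wcomp[OF adm]]) simp_all
  finally show "scal (wcomp Psi w k m) x \<le> c ^ m * (SUP x\<in>X. scal (wcomp Phi w k m) x)" .
qed

lemma normD_wcomp_ratio:
  assumes \<kappa>: "0 < \<kappa>" "\<forall>n\<ge>1. \<forall>a\<in>I n. \<forall>x\<in>X. \<kappa> \<le> scal (Phi n a) x"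
    and \<epsilon>: "0 < \<epsilon>" "\<epsilon> \<le> 1/2"
    and scal_close: "\<forall>n\<ge>1. \<forall>a\<in>I n. \<forall>x\<in>X. \<forall>y\<in>X. norm (x - y) \<le> K * \<delta> / (1 - \<eta>) \<longrightarrow>
                 \<bar>scal (Psi n a) y - scal (Phi n a) x\<bar> < \<kappa> * \<epsilon>"
    and adm: "admissible I w k m"
  shows "normD (wcomp Psi w k m) X \<le> (1 + 2 * \<epsilon>) ^ m * normD (wcomp Phi w k m) X"
    and "normD (wcomp Phi w k m) X \<le> (1 + 2 * \<epsilon>) ^ m * normD (wcomp Psi w k m) X"
proof -
  have c: "0 \<le> 1 + 2 * \<epsilon>" using \<epsilon> by simp
  show "normD (wcomp Psi w k m) X \<le> (1 + 2 * \<epsilon>) ^ m * normD (wcomp Phi w k m) X"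
    using ratio_le_of_abs_diff_less(1) scal_close \<kappa> \<epsilon> by (intro normD_wcomp_le_power[OF c _ adm]) blast
  interpret swapped: ncifs_pair X V K \<eta> I Psi Phi r \<delta> by (rule ncifs_pair_swap)
  have "\<forall>n\<ge>1. \<forall>a\<in>I n. \<forall>x\<in>X. \<forall>y\<in>X. norm (x - y) \<le> K * \<delta> / (1 - \<eta>) \<longrightarrow>
          scal (Phi n a) y \<le> (1 + 2 * \<epsilon>) * scal (Psi n a) x"
  proof (intro allI impI ballI)
    fix n a x y assume "n \<ge> 1" "a \<in> I n" "x \<in> X" "y \<in> X" "norm (x - y) \<le> K * \<delta> / (1 - \<eta>)"
    then show "scal (Phi n a) y \<le> (1 + 2 * \<epsilon>) * scal (Psi n a) x"
      using ratio_le_of_abs_diff_less(2) scal_close \<kappa> \<epsilon> by (metis norm_minus_commute)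
  qed
  then show "normD (wcomp Phi w k m) X \<le> (1 + 2 * \<epsilon>) ^ m * normD (wcomp Psi w k m) X"
    by (rule swapped.normD_wcomp_le_power[OF c _ adm])
qed

end

section \<open>Continuity on \<open>Ku\<close>\<close>

lemma Ku_imp_ncifs_system:
  "Phi \<in> Ku X V K \<eta> I \<Longrightarrow> X \<subseteq> V \<Longrightarrow> X \<noteq> {} \<Longrightarrow> ncifs_system X V K \<eta> I Phi"
  unfolding ncifs_system_def by (simp add: Ku_def)

lemma Ku_scal_lower_bound:
  assumes Phi: "Phi \<in> Ku X V K \<eta> I" and "X \<subseteq> V" "X \<noteq> {}"
  obtains \<kappa> where "0 < \<kappa>" "\<forall>n\<ge>1. \<forall>a\<in>I n. \<forall>x\<in>X. \<kappa> \<le> scal (Phi n a) x"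
proof -
  interpret ncifs_system X V K \<eta> I Phi using Ku_imp_ncifs_system assms .
  let ?T = "{(n, a, x). n \<ge> 1 \<and> a \<in> I n \<and> x \<in> X}"
  let ?f = "\<lambda>p. scal (Phi (fst p) (fst (snd p))) (snd (snd p))"
  obtain \<kappa> where \<kappa>: "0 < \<kappa>" "\<kappa> < (INF p\<in>?T. ?f p)" using Phi unfolding Ku_def by blast
  have "bdd_below (?f ` ?T)"
    using scal_pos X_subset_V by (intro bdd_belowI2[of _ 0]) (auto simp: less_imp_le subset_iff)
  then have "\<forall>n\<ge>1. \<forall>a\<in>I n. \<forall>x\<in>X. \<kappa> \<le> scal (Phi n a) x"
    using \<kappa>(2) cINF_lower[of ?f ?T] by (intro allI impI ballI) force
  with \<kappa>(1) show ?thesis by (rule that)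
qed

lemma Ku_scal_equicontinuous:
  assumes "Phi \<in> Ku X V K \<eta> I" "e > 0"
  obtains \<rho> where "\<rho> > 0" "\<forall>n\<ge>1. \<forall>a\<in>I n. \<forall>x\<in>X. \<forall>y\<in>X. dist x y < \<rho> \<longrightarrow>
      \<bar>scal (Phi n a) x - scal (Phi n a) y\<bar> < e"
proof -
  have "\<forall>e>0. \<exists>\<rho>>0. \<forall>n\<ge>1. \<forall>a\<in>I n. \<forall>x\<in>X. \<forall>y\<in>X. dist x y < \<rho> \<longrightarrow>
          \<bar>scal (Phi n a) x - scal (Phi n a) y\<bar> < e"
    using assms(1) by (simp add: Ku_def)
  then show ?thesis using assms(2) that by blast
qed

lemma du_lessD:
  assumes "du X I Psi Phi < ereal \<delta>" "n \<ge> 1" "a \<in> I n" "x \<in> X"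
  shows "norm (Psi n a x - Phi n a x) < \<delta>"
    and "onorm (\<lambda>v. frechet_derivative (Psi n a) (at x) v - frechet_derivative (Phi n a) (at x) v) < \<delta>"
proof -
  let ?M = "max (SUP x\<in>X. ereal (norm (Psi n a x - Phi n a x)))
          (SUP x\<in>X. ereal (onorm (\<lambda>v. frechet_derivative (Psi n a) (at x) v
                                     - frechet_derivative (Phi n a) (at x) v)))"
  have "?M \<le> du X I Psi Phi"
    unfolding du_def using assms(2,3)
    by (intro SUP_upper2[of n] SUP_upper2[of a]) auto
  then have M: "?M < ereal \<delta>" using assms(1) by (rule le_less_trans)
  show "norm (Psi n a x - Phi n a x) < \<delta>"
    using le_less_trans[OF SUP_upper[OF assms(4)] le_less_trans[OF max.cobounded1 M]] by simp
  show "onorm (\<lambda>v. frechet_derivative (Psi n a) (at x) v - frechet_derivative (Phi n a) (at x) v) < \<delta>"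
    using le_less_trans[OF SUP_upper[OF assms(4)] le_less_trans[OF max.cobounded2 M]] by simp
qed

lemma du_less_imp_scal_close:
  assumes "ncifs_system X V K \<eta> I Phi" "ncifs_system X V K \<eta> I Psi"
    and du: "du X I Psi Phi < ereal \<delta>" and n: "n \<ge> 1" "a \<in> I n" and x: "x \<in> X"
  shows "\<bar>scal (Psi n a) x - scal (Phi n a) x\<bar> < \<delta>"
proof -
  interpret P: ncifs_system X V K \<eta> I Phi by fact
  interpret Q: ncifs_system X V K \<eta> I Psi by fact
  have xV: "x \<in> V" using x P.X_subset_V by blast
  have "\<bar>scal (Psi n a) x - scal (Phi n a) x\<bar> \<le>
      onorm (\<lambda>v. frechet_derivative (Psi n a) (at x) v - frechet_derivative (Phi n a) (at x) v)"
    unfolding scal_def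
    by (rule onorm_diff_ge[OF Q.bounded_linear_derivative[OF n xV] P.bounded_linear_derivative[OF n xV]])
  also have "\<dots> < \<delta>" by (rule du_lessD(2)[OF du n x])
  finally show ?thesis .
qed

lemma du_less_imp_scal_close_near:
  assumes "ncifs_system X V K \<eta> I Phi" "ncifs_system X V K \<eta> I Psi"
    and du: "du X I Psi Phi < ereal \<delta>"
    and equicont: "\<forall>n\<ge>1. \<forall>a\<in>I n. \<forall>x\<in>X. \<forall>y\<in>X. dist x y < \<rho> \<longrightarrow>
                     \<bar>scal (Phi n a) x - scal (Phi n a) y\<bar> < e"
    and "d < \<rho>"
  shows "\<forall>n\<ge>1. \<forall>a\<in>I n. \<forall>x\<in>X. \<forall>y\<in>X. norm (x - y) \<le> d \<longrightarrow>
           \<bar>scal (Psi n a) y - scal (Phi n a) x\<bar> < \<delta> + e"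
proof (intro allI impI ballI)
  fix n a x y assume n: "n \<ge> 1" "a \<in> I n" and xy: "x \<in> X" "y \<in> X" "norm (x - y) \<le> d"
  have "\<bar>scal (Psi n a) y - scal (Phi n a) y\<bar> < \<delta>"
    using du_less_imp_scal_close[OF assms(1,2) du n xy(2)] .
  moreover have "\<bar>scal (Phi n a) y - scal (Phi n a) x\<bar> < e"
    using equicont n xy \<open>d < \<rho>\<close> by (simp add: dist_norm norm_minus_commute)
  ultimately show "\<bar>scal (Psi n a) y - scal (Phi n a) x\<bar> < \<delta> + e" by linarith
qed

text \<open>Given \<open>c > 1\<close>, the constants are chosen so that the orbits of \<open>Phi\<close> and \<open>Psi\<close> stay within
  \<open>K \<delta> / (1 - \<eta>) < \<rho>\<close> of each other, where \<open>\<rho>\<close> comes from equicontinuity, and then the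
  one-step factors agree up to \<open>\<kappa> \<epsilon>\<close>, i.e. up to the ratio \<open>1 + 2 \<epsilon> \<le> c\<close>.\<close>
lemma Ku_normD_wcomp_ratio:
  assumes X: "compact X" "X \<noteq> {}" and V: "open V" "X \<subseteq> V" and K: "K \<ge> 1" and \<eta>: "\<eta> < 1"
    and I: "I 1 \<noteq> {}" and Phi: "Phi \<in> Ku X V K \<eta> I" and c: "c > 1"
  obtains \<delta> where "\<delta> > 0"
    "\<And>Psi w k m. Psi \<in> Ku X V K \<eta> I \<Longrightarrow> du X I Psi Phi < ereal \<delta> \<Longrightarrow> admissible I w k m \<Longrightarrow>
       normD (wcomp Psi w k m) X \<le> c ^ m * normD (wcomp Phi w k m) X \<and>
       normD (wcomp Phi w k m) X \<le> c ^ m * normD (wcomp Psi w k m) X"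
proof -
  interpret P: ncifs_system X V K \<eta> I Phi using Ku_imp_ncifs_system Phi X V by blast
  obtain \<kappa> where \<kappa>: "0 < \<kappa>" "\<forall>n\<ge>1. \<forall>a\<in>I n. \<forall>x\<in>X. \<kappa> \<le> scal (Phi n a) x"
    using Ku_scal_lower_bound Phi X V by blast
  define \<epsilon> where "\<epsilon> = min (1/2) ((c - 1) / 2)"
  have "\<epsilon> \<le> (c - 1) / 2" unfolding \<epsilon>_def by (rule min.cobounded2)
  moreover have "0 < \<epsilon>" "\<epsilon> \<le> 1/2" unfolding \<epsilon>_def using c by auto
  ultimately have \<epsilon>: "0 < \<epsilon>" "\<epsilon> \<le> 1/2" "1 + 2 * \<epsilon> \<le> c" by auto
  obtain \<rho> where \<rho>: "\<rho> > 0" and equicont: "\<forall>n\<ge>1. \<forall>a\<in>I n. \<forall>x\<in>X. \<forall>y\<in>X. dist x y < \<rho> \<longrightarrow>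
      \<bar>scal (Phi n a) x - scal (Phi n a) y\<bar> < \<kappa> * \<epsilon> / 2"
    using Ku_scal_equicontinuous[OF Phi] \<kappa>(1) \<epsilon>(1) by (metis half_gt_zero mult_pos_pos)
  obtain r where r: "r > 0" "(\<Union>x\<in>X. ball x r) \<subseteq> V"
    using compact_subset_open_imp_ball_epsilon_subset[OF X(1) V(1,2)] by blast
  have \<eta>0: "0 \<le> \<eta>" using P.eta_nonneg[OF _ I] by simp
  define \<delta> where "\<delta> = min (min r (\<kappa> * \<epsilon> / 2)) (\<rho> * (1 - \<eta>) / (2 * K))"
  have \<delta>: "0 < \<delta>" "\<delta> \<le> r" "\<delta> \<le> \<kappa> * \<epsilon> / 2"
    unfolding \<delta>_def using r \<kappa> \<epsilon> \<rho> \<eta> K by auto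
  have "K * \<delta> / (1 - \<eta>) \<le> \<rho> / 2"
    using \<eta> K \<rho> unfolding \<delta>_def by (simp add: field_simps min_def)
  then have orbit_dist: "K * \<delta> / (1 - \<eta>) < \<rho>" using \<rho> by linarith
  show ?thesis
  proof (rule that[OF \<delta>(1)])
    fix Psi w k m assume Psi: "Psi \<in> Ku X V K \<eta> I" and du: "du X I Psi Phi < ereal \<delta>"
      and adm: "admissible I w k m"
    have Q: "ncifs_system X V K \<eta> I Psi" using Ku_imp_ncifs_system Psi X V by blast
    interpret ncifs_pair X V K \<eta> I Phi Psi r \<delta>
      using P.ncifs_system_axioms Q r K \<eta> \<eta>0 \<delta> du_lessD(1)[OF du]
      by (auto simp: ncifs_pair_def ncifs_pair_axioms_def)
    have "\<forall>n\<ge>1. \<forall>a\<in>I n. \<forall>x\<in>X. \<forall>y\<in>X. norm (x - y) \<le> K * \<delta> / (1 - \<eta>) \<longrightarrow>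
            \<bar>scal (Psi n a) y - scal (Phi n a) x\<bar> < \<kappa> * \<epsilon>"
      using du_less_imp_scal_close_near[OF P.ncifs_system_axioms Q du equicont orbit_dist] \<delta>(3)
      by fastforce
    moreover have "(1 + 2 * \<epsilon>) ^ m \<le> c ^ m" using \<epsilon> by (intro power_mono) auto
    ultimately show "normD (wcomp Psi w k m) X \<le> c ^ m * normD (wcomp Phi w k m) X \<and>
       normD (wcomp Phi w k m) X \<le> c ^ m * normD (wcomp Psi w k m) X"
      using normD_wcomp_ratio[OF \<kappa> \<epsilon>(1,2) _ adm] P.normD_wcomp_pos[OF adm] Q.normD_wcomp_pos[OF adm]
      by (smt (verit) mult_right_mono)
  qed
qed

lemma ln_sum_powr_le_add:
  fixes f g :: "'w \<Rightarrow> real"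
  assumes A: "finite A" "A \<noteq> {}" and c: "c \<ge> 1" and t: "t \<ge> 0"
    and fg: "\<And>w. w \<in> A \<Longrightarrow> 0 < f w \<and> 0 < g w \<and> g w \<le> c ^ n * f w"
  shows "(1 / real n) * ln (\<Sum>w\<in>A. g w powr t) \<le> (1 / real n) * ln (\<Sum>w\<in>A. f w powr t) + t * ln c"
proof (cases "n = 0")
  case True
  then show ?thesis using c t by simp
next
  case False
  have cn: "0 < c ^ n" using c by simp
  have "(\<Sum>w\<in>A. g w powr t) \<le> (\<Sum>w\<in>A. (c ^ n * f w) powr t)"
    using fg t by (intro sum_mono powr_mono2) (auto simp: less_imp_le)
  also have "\<dots> = (c ^ n) powr t * (\<Sum>w\<in>A. f w powr t)"
    using fg cn by (simp add: sum_distrib_left powr_mult less_imp_le)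
  finally have le: "(\<Sum>w\<in>A. g w powr t) \<le> (c ^ n) powr t * (\<Sum>w\<in>A. f w powr t)" .
  have pg: "0 < (\<Sum>w\<in>A. g w powr t)" and pf: "0 < (\<Sum>w\<in>A. f w powr t)"
    using fg by (force intro!: sum_pos A)+
  have "ln (\<Sum>w\<in>A. g w powr t) \<le> ln ((c ^ n) powr t * (\<Sum>w\<in>A. f w powr t))"
    using le pg by simp
  also have "\<dots> = real n * (t * ln c) + ln (\<Sum>w\<in>A. f w powr t)"
    using cn pf c by (simp add: ln_mult ln_powr ln_realpow)
  finally show ?thesis using False by (simp add: field_simps)
qed

lemma liminf_ereal_le_add:
  fixes a b :: "nat \<Rightarrow> real"
  assumes "\<And>n. a n \<le> b n + e"
  shows "liminf (\<lambda>n. ereal (a n)) \<le> liminf (\<lambda>n. ereal (b n)) + ereal e"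
proof -
  have "liminf (\<lambda>n. ereal (a n)) \<le> liminf (\<lambda>n. ereal (b n) + ereal e)"
    by (rule Liminf_mono) (use assms in auto)
  also have "\<dots> = liminf (\<lambda>n. ereal (b n)) + ereal e"
    by (rule Liminf_add_ereal_right) auto
  finally show ?thesis .
qed

lemma lower_pressure_le_add:
  assumes "ncifs_system X V K \<eta> I Phi" "ncifs_system X V K \<eta> I Psi"
    and I: "\<forall>n\<ge>1. finite (I n) \<and> I n \<noteq> {}" and c: "c \<ge> 1" and t: "t \<ge> 0"
    and ratio: "\<And>w n. admissible I w 1 n \<Longrightarrow>
                  normD (wcomp Psi w 1 n) X \<le> c ^ n * normD (wcomp Phi w 1 n) X"
  shows "lower_pressure X I Psi t \<le> lower_pressure X I Phi t + ereal (t * ln c)"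
proof -
  interpret P: ncifs_system X V K \<eta> I Phi by fact
  interpret Q: ncifs_system X V K \<eta> I Psi by fact
  have words: "finite (PiE {1..n} I)" "PiE {1..n} I \<noteq> {}" for n
    using I by (auto intro!: finite_PiE simp: PiE_eq_empty_iff)
  show ?thesis
    unfolding lower_pressure_def
    using ratio admissible_PiE P.normD_wcomp_pos Q.normD_wcomp_pos
    by (intro liminf_ereal_le_add ln_sum_powr_le_add[OF words c t]) blast
qed

lemma ereal_open_nbhd:
  fixes p :: ereal
  assumes "open S" "p \<in> S"
  obtains e where "e > 0" "\<And>q. q \<le> p + ereal e \<Longrightarrow> p \<le> q + ereal e \<Longrightarrow> q \<in> S"
proof (cases p)
  case (real r)
  obtain e where e: "e > 0" "ball r e \<subseteq> ereal -` S"
    using openE[OF open_ereal_vimage[OF assms(1)], of r] assms(2) real by auto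
  show ?thesis
  proof (rule that[of "e / 2"])
    show "0 < e / 2" using e by simp
    fix q assume q: "q \<le> p + ereal (e / 2)" "p \<le> q + ereal (e / 2)"
    then obtain s where s: "q = ereal s" "s \<le> r + e / 2" "r \<le> s + e / 2"
      using real by (cases q) auto
    then have "s \<in> ball r e" using e by (simp add: dist_real_def abs_less_iff)
    then show "q \<in> S" using e s by auto
  qed
next
  case PInf
  show ?thesis by (rule that[of 1]) (use assms PInf in \<open>auto elim: ereal_cases[of q for q]\<close>)
next
  case MInf
  show ?thesis by (rule that[of 1]) (use assms MInf in \<open>auto elim: ereal_cases[of q for q]\<close>)
qed

theorem theorem10p3:
  fixes X V :: "'a::euclidean_space set" and K \<eta> t :: real and I :: "nat \<Rightarrow> 'b set"
  assumes "compact X" and "X \<noteq> {}" and "closure (interior X) = X"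
    and "smooth_boundary X \<or> convex X"
    and "open V" and "connected V" and "X \<subseteq> V"
    and "K \<ge> 1" and "\<eta> < 1"
    and "\<forall>n\<ge>1. finite (I n) \<and> I n \<noteq> {}"
    and "t \<ge> 0"
  shows "\<forall>Phi\<in>Ku X V K \<eta> I. \<forall>S. open S \<and> lower_pressure X I Phi t \<in> S \<longrightarrow>
           (\<exists>\<delta>>0. \<forall>Psi\<in>Ku X V K \<eta> I. du X I Psi Phi < ereal \<delta> \<longrightarrow>
                     lower_pressure X I Psi t \<in> S)"
proof (intro ballI allI impI)
  fix Phi S assume Phi: "Phi \<in> Ku X V K \<eta> I" and S: "open S \<and> lower_pressure X I Phi t \<in> S"
  obtain e where e: "e > 0" and near: "\<And>q. q \<le> lower_pressure X I Phi t + ereal e \<Longrightarrow>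
      lower_pressure X I Phi t \<le> q + ereal e \<Longrightarrow> q \<in> S"
    using ereal_open_nbhd S by blast
  define c where "c = exp (e / (t + 1))"
  have c: "c > 1" unfolding c_def using e assms(11) by simp
  have "t * ln c \<le> e" unfolding c_def using e assms(11) by (simp add: field_simps)
  then have tc: "ereal (t * ln c) \<le> ereal e" by simp
  obtain \<delta> where "\<delta> > 0" and ratio: "\<And>Psi w k m. Psi \<in> Ku X V K \<eta> I \<Longrightarrow> du X I Psi Phi < ereal \<delta> \<Longrightarrow>
       admissible I w k m \<Longrightarrow> normD (wcomp Psi w k m) X \<le> c ^ m * normD (wcomp Phi w k m) X \<and>
         normD (wcomp Phi w k m) X \<le> c ^ m * normD (wcomp Psi w k m) X"
    using Ku_normD_wcomp_ratio[OF assms(1,2,5,7,8,9) _ Phi c] assms(10) by blast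
  show "\<exists>\<delta>>0. \<forall>Psi\<in>Ku X V K \<eta> I. du X I Psi Phi < ereal \<delta> \<longrightarrow> lower_pressure X I Psi t \<in> S"
  proof (intro exI[of _ \<delta>] conjI ballI impI)
    fix Psi assume Psi: "Psi \<in> Ku X V K \<eta> I" and du: "du X I Psi Phi < ereal \<delta>"
    have sys: "ncifs_system X V K \<eta> I Phi" "ncifs_system X V K \<eta> I Psi"
      using Ku_imp_ncifs_system Phi Psi assms(2,7) by blast+
    have "lower_pressure X I Psi t \<le> lower_pressure X I Phi t + ereal (t * ln c)"
      "lower_pressure X I Phi t \<le> lower_pressure X I Psi t + ereal (t * ln c)"
      using ratio[OF Psi du] c assms(10,11)
      by (intro lower_pressure_le_add[OF sys(1,2)] lower_pressure_le_add[OF sys(2,1)]; force)+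
    then show "lower_pressure X I Psi t \<in> S"
      using near tc by (meson add_left_mono order_trans)
  qed (fact \<open>\<delta> > 0\<close>)
qed

end
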